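(* Let $X\in\mathbb{R}^{m\times d}$ be the matrix whose rows are $x_1,\dots,x_m\in\mathbb{R}^d$, and let $\gamma>0$. The set $\{x_1,\dots,x_m\}$ is $\gamma$-shattered at the origin by $\mathcal{W}$ if and only if $XX^T$ is invertible and $y^T(XX^T)^{-1}y\le\gamma^{-2}$ for all $y\in\{\pm1\}^m$.
   Context: $\mathcal{W}=\{x\mapsto\langle w,x\rangle\mid w\in\mathbb{R}^d,\|w\|\le1\}$. A set $\{x_1,\dots,x_m\}$ is $\gamma$-shattered at the origin by $\mathcal{W}$ if for every $y\in\{\pm1\}^m$ there is $w$ with $\|w\|\le1$ and $y[i]\langle w,x_i\rangle\ge\gamma$ for all $i\in[m]$. *)

theory Defs
  imports "HOL-Analysis.Analysis"
begin

text \<open>Points x_1..x_m in R^d are the rows of X :: real^'d^'m (row i is X $ i).\<close>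

definition sign_vectors :: "(real ^ 'm) set" where
  "sign_vectors = {y. \<forall>i. y $ i = 1 \<or> y $ i = -1}"

definition shattered_at_origin :: "real \<Rightarrow> real ^ 'd ^ 'm \<Rightarrow> bool" where
  "shattered_at_origin \<gamma> X \<longleftrightarrow>
     (\<forall>y \<in> sign_vectors. \<exists>w :: real ^ 'd. norm w \<le> 1 \<and>
        (\<forall>i. y $ i * inner w (X $ i) \<ge> \<gamma>))"

end

theory Submission
  imports Defs
begin

(* The key identities are  <w, X^T a> = sum_i a_i <w, x_i>  and
   |X^T a|^2 = a . (G a).
   (=>) If the x_i are gamma-shattered, choosing the sign vector y = sgn a gives
        gamma * |a|_1 <= |X^T a|  for every a.  Hence G a = 0 forces a = 0, so G is
        invertible; and for a = G^-1 y we get |X^T a|^2 = y . a <= |a|_1, which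
        combined with the previous bound yields  y . G^-1 y <= 1/gamma^2.
   (<=) For a sign vector y, the functional w = gamma X^T G^-1 y satisfies
        <w, x_i> = gamma y_i and |w|^2 = gamma^2 (y . G^-1 y) <= 1.
   The file first proves the two identities, the facts about sign vectors and
   matrix_inv that are needed, then the two directions, and finally the theorem. *)

lemma inner_transpose_mult:
  fixes X :: "real ^ 'd ^ 'm"
  shows "inner w (transpose X *v a) = (\<Sum>i\<in>UNIV. a $ i * inner w (X $ i))"
proof -
  have "inner w (transpose X *v a) = inner (a v* X) w"
    by (simp add: inner_commute)
  also have "\<dots> = inner a (X *v w)" by (rule dot_lmul_matrix)
  also have "\<dots> = (\<Sum>i\<in>UNIV. a $ i * inner w (X $ i))"
    by (simp add: inner_vec_def matrix_vector_mul_component inner_commute mult.commute)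
  finally show ?thesis .
qed

lemma norm_transpose_mult_sq:
  fixes X :: "real ^ 'd ^ 'm"
  shows "(norm (transpose X *v a))\<^sup>2 = a \<bullet> ((X ** transpose X) *v a)"
proof -
  have "(norm (transpose X *v a))\<^sup>2 = inner (a v* X) (transpose X *v a)"
    by (simp add: power2_norm_eq_inner)
  also have "\<dots> = inner a (X *v (transpose X *v a))" by (rule dot_lmul_matrix)
  also have "\<dots> = a \<bullet> ((X ** transpose X) *v a)" by (simp only: matrix_vector_mul_assoc)
  finally show ?thesis .
qed

lemma matrix_inv_right:
  fixes A :: "'a::field ^ 'n ^ 'n"
  assumes "invertible A"
  shows "A ** matrix_inv A = mat 1"
  using someI_ex[OF assms[unfolded invertible_def]] unfolding matrix_inv_def by blast

lemma sign_vector_abs: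
  assumes "y \<in> sign_vectors"
  shows "\<bar>y $ i\<bar> = 1"
proof -
  have "y $ i = 1 \<or> y $ i = -1" using assms by (simp add: sign_vectors_def)
  then show ?thesis by auto
qed

lemma sign_vector_inner_le_l1:
  assumes "y \<in> sign_vectors"
  shows "y \<bullet> a \<le> (\<Sum>i\<in>UNIV. \<bar>a $ i\<bar>)"
  unfolding inner_vec_def
proof (rule sum_mono)
  fix i
  have "y $ i * a $ i \<le> \<bar>y $ i\<bar> * \<bar>a $ i\<bar>" by (simp add: abs_mult[symmetric])
  then show "inner (y $ i) (a $ i) \<le> \<bar>a $ i\<bar>"
    using sign_vector_abs[OF assms] by simp
qed

(* Shattering at margin gamma bounds X^T from below in l1-to-l2 norm: test the
   shattering property with the sign pattern of a. *)
lemma shattered_l1_bound: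
  fixes X :: "real ^ 'd ^ 'm"
  assumes sh: "shattered_at_origin \<gamma> X"
  shows "\<gamma> * (\<Sum>i\<in>UNIV. \<bar>a $ i\<bar>) \<le> norm (transpose X *v a)"
proof -
  define s :: "real ^ 'm" where "s = (\<chi> i. if a $ i \<ge> 0 then 1 else -1)"
  have "s \<in> sign_vectors" by (simp add: s_def sign_vectors_def)
  then obtain w :: "real ^ 'd" where w: "norm w \<le> 1" "\<And>i. s $ i * inner w (X $ i) \<ge> \<gamma>"
    using sh unfolding shattered_at_origin_def by blast
  have "\<gamma> * (\<Sum>i\<in>UNIV. \<bar>a $ i\<bar>) = (\<Sum>i\<in>UNIV. \<bar>a $ i\<bar> * \<gamma>)"
    by (simp add: sum_distrib_left mult.commute)
  also have "\<dots> \<le> (\<Sum>i\<in>UNIV. a $ i * inner w (X $ i))"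
  proof (rule sum_mono)
    fix i
    have "\<bar>a $ i\<bar> * \<gamma> \<le> \<bar>a $ i\<bar> * (s $ i * inner w (X $ i))"
      using w(2)[of i] by (simp add: mult_left_mono)
    also have "\<dots> = a $ i * inner w (X $ i)"
      by (simp add: s_def abs_if)
    finally show "\<bar>a $ i\<bar> * \<gamma> \<le> a $ i * inner w (X $ i)" .
  qed
  also have "\<dots> = inner w (transpose X *v a)" by (rule inner_transpose_mult[symmetric])
  also have "\<dots> \<le> norm w * norm (transpose X *v a)" by (rule norm_cauchy_schwarz)
  also have "\<dots> \<le> norm (transpose X *v a)"
    using w(1) by (simp add: mult_left_le_one_le)
  finally show ?thesis .
qed

(* Shattered points with positive margin have an invertible Gram matrix:
   G a = 0 gives |X^T a| = 0, hence |a|_1 = 0. *)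
lemma shattered_gram_invertible:
  fixes X :: "real ^ 'd ^ 'm"
  assumes "\<gamma> > 0" and sh: "shattered_at_origin \<gamma> X"
  shows "invertible (X ** transpose X)"
  unfolding invertible_left_inverse matrix_left_invertible_ker
proof (intro allI impI)
  fix a assume "(X ** transpose X) *v a = 0"
  then have "norm (transpose X *v a) = 0"
    using norm_transpose_mult_sq[of X a] by simp
  then have "(\<Sum>i\<in>UNIV. \<bar>a $ i\<bar>) \<le> 0"
    using shattered_l1_bound[OF sh, of a] \<open>\<gamma> > 0\<close> by (simp add: mult_le_0_iff)
  then have "\<forall>i\<in>UNIV. \<bar>a $ i\<bar> = 0"
    using sum_nonneg_eq_0_iff[of UNIV "\<lambda>i. \<bar>a $ i\<bar>"] by (simp add: order_antisym)
  then show "a = 0" by (simp add: vec_eq_iff)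
qed

lemma sq_le_inverse_sq:
  fixes \<gamma> t :: real
  assumes "\<gamma> > 0" "t \<ge> 0" "\<gamma> * t\<^sup>2 \<le> t"
  shows "t\<^sup>2 \<le> 1 / \<gamma>\<^sup>2"
proof -
  have "\<gamma> * t \<le> 1"
    using assms by (cases "t = 0") (auto simp: power2_eq_square)
  then have "(\<gamma> * t)\<^sup>2 \<le> 1"
    using assms by (simp add: abs_le_iff power_le_one)
  then show ?thesis
    using assms by (simp add: power_mult_distrib field_simps)
qed

(* Necessity of the quadratic bound: with a = G^-1 y we have |X^T a|^2 = y . a,
   which is at most |a|_1 <= |X^T a| / gamma. *)
lemma shattered_quadratic_bound:
  fixes X :: "real ^ 'd ^ 'm"
  assumes "\<gamma> > 0" and sh: "shattered_at_origin \<gamma> X" and y: "y \<in> sign_vectors"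
  shows "y \<bullet> (matrix_inv (X ** transpose X) *v y) \<le> 1 / \<gamma>\<^sup>2"
proof -
  define a where "a = matrix_inv (X ** transpose X) *v y"
  define t where "t = norm (transpose X *v a)"
  have "(X ** transpose X) *v a = y"
    using matrix_inv_right[OF shattered_gram_invertible[OF assms(1) sh]]
    by (simp add: a_def matrix_vector_mul_assoc)
  then have ya: "y \<bullet> a = t\<^sup>2"
    using norm_transpose_mult_sq[of X a] by (simp add: t_def inner_commute)
  have "\<gamma> * t\<^sup>2 \<le> \<gamma> * (\<Sum>i\<in>UNIV. \<bar>a $ i\<bar>)"
    using sign_vector_inner_le_l1[OF y, of a] ya \<open>\<gamma> > 0\<close> by simp
  also have "\<dots> \<le> t"
    using shattered_l1_bound[OF sh] by (simp add: t_def)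
  finally have "t\<^sup>2 \<le> 1 / \<gamma>\<^sup>2"
    using sq_le_inverse_sq[OF \<open>\<gamma> > 0\<close>] by (simp add: t_def)
  then show ?thesis using ya by (simp add: a_def)
qed

(* Sufficiency: for a sign vector y, w = gamma X^T G^-1 y has <w, x_i> = gamma y_i
   and |w|^2 = gamma^2 (y . G^-1 y) <= 1, so it realises y with margin gamma. *)
lemma quadratic_bound_shattered:
  fixes X :: "real ^ 'd ^ 'm"
  assumes "\<gamma> > 0" and inv: "invertible (X ** transpose X)"
    and bound: "\<forall>y \<in> sign_vectors. y \<bullet> (matrix_inv (X ** transpose X) *v y) \<le> 1 / \<gamma>\<^sup>2"
  shows "shattered_at_origin \<gamma> X"
  unfolding shattered_at_origin_def
proof
  fix y :: "real ^ 'm" assume y: "y \<in> sign_vectors"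
  let ?G = "X ** transpose X"
  define a where "a = \<gamma> *\<^sub>R (matrix_inv ?G *v y)"
  define w where "w = transpose X *v a"
  have Ga: "?G *v a = \<gamma> *\<^sub>R y"
    using matrix_inv_right[OF inv]
    by (simp add: a_def matrix_vector_mul_assoc matrix_vector_mult_scaleR)
  have margin: "inner w (X $ i) = \<gamma> * y $ i" for i
  proof -
    have "inner w (X $ i) = (X *v w) $ i"
      by (simp add: matrix_vector_mul_component inner_commute)
    also have "X *v w = ?G *v a" by (simp only: w_def matrix_vector_mul_assoc)
    finally show ?thesis using Ga by simp
  qed
  have "(norm w)\<^sup>2 = a \<bullet> (?G *v a)"
    unfolding w_def by (rule norm_transpose_mult_sq)
  also have "\<dots> = \<gamma>\<^sup>2 * (y \<bullet> (matrix_inv ?G *v y))"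
    using Ga by (simp add: a_def power2_eq_square inner_commute)
  also have "\<dots> \<le> \<gamma>\<^sup>2 * (1 / \<gamma>\<^sup>2)"
    using bound y by (intro mult_left_mono) auto
  also have "\<dots> = 1" using \<open>\<gamma> > 0\<close> by simp
  finally have "norm w \<le> 1"
    by (simp add: power_le_one_iff)
  moreover have "\<forall>i. y $ i * inner w (X $ i) \<ge> \<gamma>"
  proof
    fix i
    have "y $ i * y $ i = 1"
      using sign_vector_abs[OF y, of i] by (metis abs_mult_self_eq mult_1)
    then show "y $ i * inner w (X $ i) \<ge> \<gamma>"
      by (simp add: margin mult.left_commute)
  qed
  ultimately show "\<exists>w :: real ^ 'd. norm w \<le> 1 \<and> (\<forall>i. y $ i * inner w (X $ i) \<ge> \<gamma>)"
    by blast
qed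

theorem mainTheorem6:
  fixes X :: "real ^ 'd ^ 'm" and \<gamma> :: real
  assumes "\<gamma> > 0"
  shows "shattered_at_origin \<gamma> X \<longleftrightarrow>
           (invertible (X ** transpose X) \<and>
            (\<forall>y \<in> sign_vectors. y \<bullet> (matrix_inv (X ** transpose X) *v y) \<le> 1 / \<gamma>\<^sup>2))"
  using shattered_gram_invertible[OF assms] shattered_quadratic_bound[OF assms]
    quadratic_bound_shattered[OF assms] by blast

end
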